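(* Let $k$ be a field and $A$ a finite-dimensional monomial algebra with two blocks $A_1$ and $A_2$. Let $B$ be the algebra obtained from $A$ by gluing idempotents (vertices) $e_1\in A_1$ and $e_n\in A_2$. Then the radical embedding $B\hookrightarrow A$ restricts to a radical embedding $Z(B)\hookrightarrow Z(A)$. In particular $\dim_kZ(A)=\dim_kZ(B)+1$.
   Context: A monomial algebra is $A=kQ_A/I_A$ with $Q_A$ a finite quiver with vertices $e_1,\dots,e_n$ and $I_A$ an admissible ideal generated by paths. Gluing $e_1,e_n$ (assumed non-isolated): $B$ is the subalgebra of $A$ generated by $e_1+e_n$, $e_2,\dots,e_{n-1}$ and all arrows; $B\cong kQ_B/I_B$ where $Q_B$ is $Q_A$ with $e_1,e_n$ identified and $I_B$ is generated by $I_A$ and all newly formed length-2 paths through the identified vertex. A radical embedding is an algebra monomorphism $\phi:B\to A$ with $\phi(\mathrm{rad}\,B)=\mathrm{rad}\,A$. $Z(\cdot)$ denotes the center. *)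

theory Defs
  imports Complex_Main "HOL-Library.Sublist" "HOL-Library.Function_Algebras"
begin

text \<open>A finite quiver: vertex set V, arrow set Ar, source s, target t.
  A path is a pair (start vertex, list of arrows), composed left to right.
  The trivial path (v, []) is the idempotent e_v.\<close>

definition valid_path :: "'v set \<Rightarrow> 'a set \<Rightarrow> ('a \<Rightarrow> 'v) \<Rightarrow> ('a \<Rightarrow> 'v) \<Rightarrow> 'v \<times> 'a list \<Rightarrow> bool" where
  "valid_path V Ar s t p \<longleftrightarrow> fst p \<in> V \<and> set (snd p) \<subseteq> Ar
     \<and> (snd p \<noteq> [] \<longrightarrow> s (hd (snd p)) = fst p)
     \<and> (\<forall>i. Suc i < length (snd p) \<longrightarrow> t (snd p ! i) = s (snd p ! Suc i))"

definition ptgt :: "('a \<Rightarrow> 'v) \<Rightarrow> 'v \<times> 'a list \<Rightarrow> 'v" where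
  "ptgt t p = (if snd p = [] then fst p else t (last (snd p)))"

definition pcat :: "('a \<Rightarrow> 'v) \<Rightarrow> 'v \<times> 'a list \<Rightarrow> 'v \<times> 'a list \<Rightarrow> ('v \<times> 'a list) option" where
  "pcat t q r = (if ptgt t q = fst r then Some (fst q, snd q @ snd r) else None)"

text \<open>Monomial relations R (arrow words of length \<ge> 2); the nonzero paths of kQ/I,
  which form a k-basis of the monomial algebra.\<close>
definition NP :: "'v set \<Rightarrow> 'a set \<Rightarrow> ('a \<Rightarrow> 'v) \<Rightarrow> ('a \<Rightarrow> 'v) \<Rightarrow> 'a list set \<Rightarrow> ('v \<times> 'a list) set" where
  "NP V Ar s t R = {p. valid_path V Ar s t p \<and> \<not> (\<exists>r\<in>R. sublist r (snd p))}"

text \<open>Elements of the monomial algebra A = kQ/I: k-linear combinations of nonzero paths P.\<close>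
definition algA :: "('v \<times> 'a list) set \<Rightarrow> (('v \<times> 'a list) \<Rightarrow> 'k::field) set" where
  "algA P = {f. \<forall>p. p \<notin> P \<longrightarrow> f p = 0}"

definition amult :: "('v \<times> 'a list) set \<Rightarrow> ('a \<Rightarrow> 'v) \<Rightarrow> (('v \<times> 'a list) \<Rightarrow> 'k::field)
    \<Rightarrow> (('v \<times> 'a list) \<Rightarrow> 'k) \<Rightarrow> (('v \<times> 'a list) \<Rightarrow> 'k)" where
  "amult P t f g = (\<lambda>p. if p \<in> P then
       (\<Sum>x\<in>{x. fst x \<in> P \<and> snd x \<in> P \<and> pcat t (fst x) (snd x) = Some p}. f (fst x) * g (snd x))
     else 0)"

definition aunit :: "('v \<times> 'a list) set \<Rightarrow> (('v \<times> 'a list) \<Rightarrow> 'k::field)" where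
  "aunit P = (\<lambda>p. if p \<in> P \<and> snd p = [] then 1 else 0)"

definition vert_elt :: "'v \<Rightarrow> (('v \<times> 'a list) \<Rightarrow> 'k::field)" where
  "vert_elt v = (\<lambda>p. if p = (v, []) then 1 else 0)"

definition arrow_elt :: "('a \<Rightarrow> 'v) \<Rightarrow> 'a \<Rightarrow> (('v \<times> 'a list) \<Rightarrow> 'k::field)" where
  "arrow_elt s a = (\<lambda>p. if p = (s a, [a]) then 1 else 0)"

definition gen_subalg :: "('v \<times> 'a list) set \<Rightarrow> ('a \<Rightarrow> 'v) \<Rightarrow> (('v \<times> 'a list) \<Rightarrow> 'k::field) set
    \<Rightarrow> (('v \<times> 'a list) \<Rightarrow> 'k) set" where
  "gen_subalg P t G = \<Inter> {S. S \<subseteq> algA P \<and> G \<subseteq> S \<and> aunit P \<in> S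
      \<and> (\<forall>x\<in>S. \<forall>y\<in>S. (\<lambda>p. x p + y p) \<in> S \<and> amult P t x y \<in> S)
      \<and> (\<forall>c x. x \<in> S \<longrightarrow> (\<lambda>p. c * x p) \<in> S)}"

definition center :: "('v \<times> 'a list) set \<Rightarrow> ('a \<Rightarrow> 'v) \<Rightarrow> (('v \<times> 'a list) \<Rightarrow> 'k::field) set
    \<Rightarrow> (('v \<times> 'a list) \<Rightarrow> 'k) set" where
  "center P t S = {z \<in> S. \<forall>x\<in>S. amult P t z x = amult P t x z}"

definition left_ideal :: "('v \<times> 'a list) set \<Rightarrow> ('a \<Rightarrow> 'v) \<Rightarrow> (('v \<times> 'a list) \<Rightarrow> 'k::field) set
    \<Rightarrow> (('v \<times> 'a list) \<Rightarrow> 'k) set \<Rightarrow> bool" where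
  "left_ideal P t S L \<longleftrightarrow> L \<subseteq> S \<and> (\<lambda>p. 0) \<in> L
     \<and> (\<forall>x\<in>L. \<forall>y\<in>L. (\<lambda>p. x p + y p) \<in> L) \<and> (\<forall>x\<in>L. (\<lambda>p. - x p) \<in> L)
     \<and> (\<forall>x\<in>S. \<forall>y\<in>L. amult P t x y \<in> L)"

definition max_left_ideal :: "('v \<times> 'a list) set \<Rightarrow> ('a \<Rightarrow> 'v) \<Rightarrow> (('v \<times> 'a list) \<Rightarrow> 'k::field) set
    \<Rightarrow> (('v \<times> 'a list) \<Rightarrow> 'k) set \<Rightarrow> bool" where
  "max_left_ideal P t S L \<longleftrightarrow> left_ideal P t S L \<and> L \<noteq> S
     \<and> (\<forall>L'. left_ideal P t S L' \<and> L \<subseteq> L' \<longrightarrow> L' = L \<or> L' = S)"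

definition jrad :: "('v \<times> 'a list) set \<Rightarrow> ('a \<Rightarrow> 'v) \<Rightarrow> (('v \<times> 'a list) \<Rightarrow> 'k::field) set
    \<Rightarrow> (('v \<times> 'a list) \<Rightarrow> 'k) set" where
  "jrad P t S = {x \<in> S. \<forall>L. max_left_ideal P t S L \<longrightarrow> x \<in> L}"

definition kdim :: "(('v \<times> 'a list) \<Rightarrow> 'k::field) set \<Rightarrow> nat" where
  "kdim S = vector_space.dim (\<lambda>c (f :: ('v \<times> 'a list) \<Rightarrow> 'k). \<lambda>p. c * f p) S"

definition qconn :: "'v set \<Rightarrow> 'a set \<Rightarrow> ('a \<Rightarrow> 'v) \<Rightarrow> ('a \<Rightarrow> 'v) \<Rightarrow> ('v \<times> 'v) set" where
  "qconn V Ar s t = ({(u, w). \<exists>a\<in>Ar. (s a = u \<and> t a = w) \<or> (s a = w \<and> t a = u)})\<^sup>*"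

end

theory Submission
  imports Defs
begin

(* Elements of A = kQ/I are coefficient functions on the nonzero paths, and the glued algebra B
   consists exactly of those whose coefficients at e_1 and e_n agree. Let u be the sum of the
   vertices in the connected component of e_1; since a path never leaves its component, u is
   central in A, while u is not in B because e_n lies in another component. Writing any x in A as
   b + c u with b in B shows Z(B) <= Z(A) and Z(A) = Z(B) + k u, hence the dimension count.
   For any subalgebra S of A the Jacobson radical of S is the set of its elements with vanishing
   vertex coefficients: such elements are nilpotent, because products of paths get longer, so
   they lie in every maximal left ideal, and conversely the kernel of each vertex coefficient is
   a maximal left ideal. An element of Z(A) with vanishing vertex coefficients lies in B, so the
   radicals of Z(A) and Z(B) coincide. *)

section \<open>Paths\<close>

lemma valid_path_prefix:
  assumes "valid_path V Ar s t (v, w1 @ w2)"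
  shows "valid_path V Ar s t (v, w1)"
proof -
  have "t (w1 ! i) = s (w1 ! Suc i)" if "Suc i < length w1" for i
  proof -
    have "t ((w1 @ w2) ! i) = s ((w1 @ w2) ! Suc i)"
      using assms that by (simp add: valid_path_def)
    then show ?thesis using that by (simp add: nth_append)
  qed
  then show ?thesis using assms by (cases w1) (simp_all add: valid_path_def)
qed

lemma ptgt_in_V:
  assumes "\<forall>a\<in>Ar. t a \<in> V" and "valid_path V Ar s t p"
  shows "ptgt t p \<in> V"
  using assms by (auto simp: valid_path_def ptgt_def) (meson last_in_set subsetD)

lemma valid_path_suffix:
  assumes tV: "\<forall>a\<in>Ar. t a \<in> V" and vp: "valid_path V Ar s t (v, w1 @ w2)"
  shows "valid_path V Ar s t (ptgt t (v, w1), w2)"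
proof -
  have step: "t ((w1 @ w2) ! i) = s ((w1 @ w2) ! Suc i)" if "Suc i < length (w1 @ w2)" for i
    using vp that by (simp add: valid_path_def)
  have "s (hd w2) = ptgt t (v, w1)" if "w2 \<noteq> []"
  proof (cases "w1 = []")
    case True
    then show ?thesis using vp that by (simp add: valid_path_def ptgt_def)
  next
    case False
    then show ?thesis
      using step[of "length w1 - 1"] that by (simp add: ptgt_def nth_append last_conv_nth hd_conv_nth)
  qed
  moreover have "t (w2 ! i) = s (w2 ! Suc i)" if "Suc i < length w2" for i
    using step[of "length w1 + i"] that by (simp add: nth_append)
  moreover have "ptgt t (v, w1) \<in> V"
    using ptgt_in_V[OF tV valid_path_prefix[OF vp]] .
  ultimately show ?thesis using vp by (auto simp: valid_path_def)
qed

lemma pcat_eq_Some: "pcat t q r = Some p \<longleftrightarrow> ptgt t q = fst r \<and> p = (fst q, snd q @ snd r)"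
  by (auto simp: pcat_def)

lemma ptgt_append: "ptgt t q = fst r \<Longrightarrow> ptgt t (fst q, snd q @ snd r) = ptgt t r"
  by (auto simp: ptgt_def)

lemma sum_fun_apply: "(sum g X) p = (\<Sum>q\<in>X. g q p)"
  by (induction X rule: infinite_finite_induct) auto

lemma vector_space_fun: "vector_space (\<lambda>c (f :: 'x \<Rightarrow> 'k::field). \<lambda>p. c * f p)"
  by unfold_locales (simp_all add: fun_eq_iff algebra_simps)

lemma dim_subspace_plus_line:
  fixes scale :: "'k::field \<Rightarrow> 'b::ab_group_add \<Rightarrow> 'b"
  assumes vs: "vector_space scale"
    and T: "module.subspace scale T" and F: "finite F" "T \<subseteq> module.span scale F"
    and u: "u \<notin> T" and S: "S = {y + scale c u | y c. y \<in> T}"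
  shows "vector_space.dim scale S = vector_space.dim scale T + 1"
proof -
  interpret vector_space scale by (rule vs)
  obtain B where B: "B \<subseteq> T" "independent B" "T \<subseteq> span B" "card B = dim T"
    using basis_exists[of T] by blast
  have "finite B" using independent_span_bound[OF F(1) B(2)] B(1) F(2) by blast
  have "u \<notin> span B" using span_minimal[OF B(1) T] u by blast
  have "dim S = card (insert u B)"
  proof (rule dim_unique)
    show "insert u B \<subseteq> S"
    proof
      fix x assume "x \<in> insert u B"
      then have "x = 0 + scale 1 u \<and> 0 \<in> T \<or> x = x + scale 0 u \<and> x \<in> T"
        using B(1) subspace_0[OF T] by auto
      then show "x \<in> S" unfolding S by blast
    qed
    show "S \<subseteq> span (insert u B)"
      using B(3) span_mono[of B "insert u B"] span_add span_scale span_base[of u "insert u B"]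
      unfolding S by blast
    show "independent (insert u B)" using independent_insertI[OF \<open>u \<notin> span B\<close> B(2)] .
  qed simp
  moreover have "u \<notin> B" using \<open>u \<notin> span B\<close> span_base by blast
  ultimately show ?thesis using B(4) \<open>finite B\<close> by simp
qed

section \<open>Monomial algebras\<close>

definition basis_elt :: "'x \<Rightarrow> 'x \<Rightarrow> 'k::field" where
  "basis_elt q = (\<lambda>p. if p = q then 1 else 0)"

fun apow :: "('v \<times> 'a list) set \<Rightarrow> ('a \<Rightarrow> 'v) \<Rightarrow> (('v \<times> 'a list) \<Rightarrow> 'k::field) \<Rightarrow> nat \<Rightarrow> (('v \<times> 'a list) \<Rightarrow> 'k)" where
  "apow P t z 0 = aunit P"
| "apow P t z (Suc k) = amult P t (apow P t z k) z"

locale monomial_algebra =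
  fixes V :: "'v set" and Ar :: "'a set" and s t :: "'a \<Rightarrow> 'v" and R :: "'a list set"
  assumes finite_V: "finite V" and finite_Ar: "finite Ar"
    and quiver: "\<forall>a\<in>Ar. s a \<in> V \<and> t a \<in> V"
    and rels: "\<forall>r\<in>R. 2 \<le> length r \<and> valid_path V Ar s t (s (hd r), r)"
    and admissible: "\<exists>N. \<forall>p. valid_path V Ar s t p \<and> N \<le> length (snd p) \<longrightarrow> (\<exists>r\<in>R. sublist r (snd p))"
begin

abbreviation P :: "('v \<times> 'a list) set" where "P \<equiv> NP V Ar s t R"

lemma short_not_in_rels: "length w < 2 \<Longrightarrow> \<not> (\<exists>r\<in>R. sublist r w)"
  using rels sublist_length_le by fastforce

lemma NP_vertex: "v \<in> V \<Longrightarrow> (v, []) \<in> P"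
  using rels by (force simp: NP_def valid_path_def)

lemma NP_arrow: "a \<in> Ar \<Longrightarrow> (s a, [a]) \<in> P"
  using short_not_in_rels[of "[a]"] quiver by (simp add: NP_def valid_path_def)

lemma NP_fst: "p \<in> P \<Longrightarrow> fst p \<in> V"
  by (simp add: NP_def valid_path_def)

lemma NP_arrows: "p \<in> P \<Longrightarrow> set (snd p) \<subseteq> Ar"
  by (simp add: NP_def valid_path_def)

lemma NP_ptgt: "p \<in> P \<Longrightarrow> ptgt t p \<in> V"
  using quiver by (auto simp: NP_def intro: ptgt_in_V)

lemma NP_prefix:
  assumes "(v, w1 @ w2) \<in> P" shows "(v, w1) \<in> P"
proof -
  have "\<not> (\<exists>r\<in>R. sublist r w1)"
    using assms by (simp add: NP_def) (meson sublist_append_rightI sublist_order.order.trans)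
  then show ?thesis using assms valid_path_prefix[of V Ar s t v w1 w2] by (simp add: NP_def)
qed

lemma NP_suffix:
  assumes "(v, w1 @ w2) \<in> P" shows "(ptgt t (v, w1), w2) \<in> P"
proof -
  have "\<not> (\<exists>r\<in>R. sublist r w2)"
    using assms by (simp add: NP_def) (meson sublist_append_leftI sublist_order.order.trans)
  moreover have "valid_path V Ar s t (ptgt t (v, w1), w2)"
    using assms quiver by (simp add: NP_def valid_path_suffix)
  ultimately show ?thesis by (simp add: NP_def)
qed

lemma NP_length_bound: "\<exists>N. \<forall>p\<in>P. length (snd p) < N"
proof -
  obtain N where "\<forall>p. valid_path V Ar s t p \<and> N \<le> length (snd p) \<longrightarrow> (\<exists>r\<in>R. sublist r (snd p))"
    using admissible by blast
  then have "\<forall>p\<in>P. length (snd p) < N" by (auto simp: NP_def not_le[symmetric])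
  then show ?thesis ..
qed

lemma finite_NP: "finite P"
proof -
  obtain N where N: "\<forall>p\<in>P. length (snd p) < N" using NP_length_bound by blast
  have "P \<subseteq> V \<times> {w. set w \<subseteq> Ar \<and> length w \<le> N}"
  proof
    fix p assume p: "p \<in> P"
    then show "p \<in> V \<times> {w. set w \<subseteq> Ar \<and> length w \<le> N}"
      using N NP_fst[OF p] NP_arrows[OF p] by (cases p) (auto intro: less_imp_le)
  qed
  moreover have "finite (V \<times> {w. set w \<subseteq> Ar \<and> length w \<le> N})"
    using finite_V finite_Ar by (simp add: finite_lists_length_le)
  ultimately show ?thesis by (rule finite_subset)
qed

lemma amult_eq_double_sum:
  assumes "p \<in> P"
  shows "amult P t f g p = (\<Sum>q\<in>P. \<Sum>r\<in>P. if pcat t q r = Some p then f q * g r else 0)"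
proof -
  have "{x. fst x \<in> P \<and> snd x \<in> P \<and> pcat t (fst x) (snd x) = Some p}
      = {x \<in> P \<times> P. pcat t (fst x) (snd x) = Some p}" by auto
  then have "amult P t f g p
      = (\<Sum>x\<in>P \<times> P. if pcat t (fst x) (snd x) = Some p then f (fst x) * g (snd x) else 0)"
    using assms finite_NP by (simp add: amult_def sum.inter_filter)
  then show ?thesis by (simp add: sum.cartesian_product split_def)
qed

lemma amult_outside: "p \<notin> P \<Longrightarrow> amult P t f g p = 0"
  by (simp add: amult_def)

definition splits3 :: "'v \<times> 'a list \<Rightarrow> 'v \<times> 'a list \<Rightarrow> 'v \<times> 'a list \<Rightarrow> 'v \<times> 'a list \<Rightarrow> bool" where
  "splits3 p q1 q2 r \<longleftrightarrow> ptgt t q1 = fst q2 \<and> ptgt t q2 = fst r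
     \<and> p = (fst q1, snd q1 @ snd q2 @ snd r)"

lemma sum_splits_left:
  assumes "p \<in> P"
  shows "(\<Sum>x\<in>P. if pcat t x r = Some p \<and> pcat t q1 q2 = Some x then c else 0)
     = (if splits3 p q1 q2 r then c else 0)"
proof -
  let ?x = "(fst q1, snd q1 @ snd q2)"
  have "splits3 p q1 q2 r \<Longrightarrow> ?x \<in> P"
    using assms NP_prefix[of "fst q1" "snd q1 @ snd q2" "snd r"] by (simp add: splits3_def)
  then have "(if ?x \<in> P then if ptgt t q1 = fst q2 \<and> pcat t ?x r = Some p then c else 0 else 0)
     = (if splits3 p q1 q2 r then c else 0)"
    by (auto simp: splits3_def pcat_eq_Some ptgt_append)
  moreover have "(\<Sum>x\<in>P. if pcat t x r = Some p \<and> pcat t q1 q2 = Some x then c else 0)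
     = (\<Sum>x\<in>P. if x = ?x then if ptgt t q1 = fst q2 \<and> pcat t ?x r = Some p then c else 0 else 0)"
    by (rule sum.cong) (auto simp: pcat_eq_Some)
  ultimately show ?thesis using finite_NP by (simp add: sum.delta)
qed

lemma sum_splits_right:
  assumes "p \<in> P"
  shows "(\<Sum>y\<in>P. if pcat t q1 y = Some p \<and> pcat t q2 r = Some y then c else 0)
     = (if splits3 p q1 q2 r then c else 0)"
proof -
  let ?y = "(fst q2, snd q2 @ snd r)"
  have "splits3 p q1 q2 r \<Longrightarrow> ?y \<in> P"
    using assms NP_suffix[of "fst q1" "snd q1" "snd q2 @ snd r"] by (simp add: splits3_def)
  then have "(if ?y \<in> P then if ptgt t q2 = fst r \<and> pcat t q1 ?y = Some p then c else 0 else 0)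
     = (if splits3 p q1 q2 r then c else 0)"
    by (auto simp: splits3_def pcat_eq_Some)
  moreover have "(\<Sum>y\<in>P. if pcat t q1 y = Some p \<and> pcat t q2 r = Some y then c else 0)
     = (\<Sum>y\<in>P. if y = ?y then if ptgt t q2 = fst r \<and> pcat t q1 ?y = Some p then c else 0 else 0)"
    by (rule sum.cong) (auto simp: pcat_eq_Some)
  ultimately show ?thesis using finite_NP by (simp add: sum.delta)
qed

text \<open>Both sides expand to the sum of \<open>f q\<^sub>1 * g q\<^sub>2 * h r\<close> over the factorisations
  \<open>p = q\<^sub>1 q\<^sub>2 r\<close> described by \<open>splits3\<close>.\<close>

lemma amult_assoc: "amult P t (amult P t f g) h = amult P t f (amult P t g h)"
proof
  fix p
  show "amult P t (amult P t f g) h p = amult P t f (amult P t g h) p"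
  proof (cases "p \<in> P")
    case False
    then show ?thesis by (simp add: amult_outside)
  next
    case p: True
    let ?c = "\<lambda>q1 q2 r. f q1 * g q2 * h r"
    have "amult P t (amult P t f g) h p = (\<Sum>x\<in>P. \<Sum>r\<in>P. \<Sum>q1\<in>P. \<Sum>q2\<in>P.
        if pcat t x r = Some p \<and> pcat t q1 q2 = Some x then ?c q1 q2 r else 0)"
      unfolding amult_eq_double_sum[OF p]
      by (intro sum.cong refl) (auto simp: amult_eq_double_sum sum_distrib_right intro!: sum.cong)
    also have "\<dots> = (\<Sum>r\<in>P. \<Sum>q1\<in>P. \<Sum>q2\<in>P. \<Sum>x\<in>P.
        if pcat t x r = Some p \<and> pcat t q1 q2 = Some x then ?c q1 q2 r else 0)"
      by (rule trans[OF sum.swap], rule sum.cong[OF refl], rule trans[OF sum.swap],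
          rule sum.cong[OF refl], rule sum.swap)
    also have "\<dots> = (\<Sum>r\<in>P. \<Sum>q1\<in>P. \<Sum>q2\<in>P. if splits3 p q1 q2 r then ?c q1 q2 r else 0)"
      by (simp add: sum_splits_left[OF p])
    finally have lhs: "amult P t (amult P t f g) h p = \<dots>" .
    have "amult P t f (amult P t g h) p = (\<Sum>q1\<in>P. \<Sum>y\<in>P. \<Sum>q2\<in>P. \<Sum>r\<in>P.
        if pcat t q1 y = Some p \<and> pcat t q2 r = Some y then ?c q1 q2 r else 0)"
      unfolding amult_eq_double_sum[OF p]
      by (intro sum.cong refl) (auto simp: amult_eq_double_sum sum_distrib_left mult.assoc intro!: sum.cong)
    also have "\<dots> = (\<Sum>q1\<in>P. \<Sum>q2\<in>P. \<Sum>r\<in>P. \<Sum>y\<in>P.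
        if pcat t q1 y = Some p \<and> pcat t q2 r = Some y then ?c q1 q2 r else 0)"
      by (rule sum.cong[OF refl], rule trans[OF sum.swap], rule sum.cong[OF refl], rule sum.swap)
    also have "\<dots> = (\<Sum>q1\<in>P. \<Sum>q2\<in>P. \<Sum>r\<in>P. if splits3 p q1 q2 r then ?c q1 q2 r else 0)"
      by (simp add: sum_splits_right[OF p])
    also have "\<dots> = (\<Sum>r\<in>P. \<Sum>q1\<in>P. \<Sum>q2\<in>P. if splits3 p q1 q2 r then ?c q1 q2 r else 0)"
      by (rule trans[OF sum.cong[OF refl sum.swap] sum.swap])
    finally show ?thesis using lhs by simp
  qed
qed

lemma amult_add_left: "amult P t (\<lambda>p. f p + g p) h = (\<lambda>p. amult P t f h p + amult P t g h p)"
  by (rule ext) (simp add: amult_def sum.distrib distrib_right)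

lemma amult_add_right: "amult P t h (\<lambda>p. f p + g p) = (\<lambda>p. amult P t h f p + amult P t h g p)"
  by (rule ext) (simp add: amult_def sum.distrib distrib_left)

lemma amult_smult_left: "amult P t (\<lambda>p. c * f p) g = (\<lambda>p. c * amult P t f g p)"
  by (rule ext) (simp add: amult_def sum_distrib_left mult.assoc)

lemma amult_smult_right: "amult P t g (\<lambda>p. c * f p) = (\<lambda>p. c * amult P t g f p)"
  by (rule ext) (simp add: amult_def sum_distrib_left mult.left_commute)

lemma amult_zero_left: "amult P t (\<lambda>p. 0) g = (\<lambda>p. 0)"
  by (rule ext) (simp add: amult_def)

lemma algA_outside: "f \<in> algA P \<Longrightarrow> p \<notin> P \<Longrightarrow> f p = 0"
  by (cases p) (simp add: algA_def)

lemma amult_in_algA: "amult P t f g \<in> algA P"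
  by (simp add: algA_def amult_outside)

lemma aunit_in_algA: "aunit P \<in> algA P"
  by (simp add: algA_def aunit_def)

lemma double_sum_single:
  assumes "a \<in> P" "b \<in> P"
    and "\<And>q r. q \<in> P \<Longrightarrow> r \<in> P \<Longrightarrow> G q r = (if q = a \<and> r = b then c else 0)"
  shows "(\<Sum>q\<in>P. \<Sum>r\<in>P. G q r) = (c :: 'k::field)"
proof -
  have "(\<Sum>q\<in>P. \<Sum>r\<in>P. G q r) = (\<Sum>q\<in>P. if q = a then \<Sum>r\<in>P. if r = b then c else 0 else 0)"
    using assms(3) by (intro sum.cong refl) auto
  then show ?thesis using finite_NP assms(1,2) by simp
qed

lemma amult_diagonal_left:
  assumes d: "\<forall>q\<in>P. d q = (if snd q = [] then \<phi> (fst q) else 0)" and p: "p \<in> P"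
  shows "amult P t d x p = \<phi> (fst p) * x p"
  unfolding amult_eq_double_sum[OF p]
proof (rule double_sum_single[OF NP_vertex[OF NP_fst[OF p]] p])
  fix q r assume q: "q \<in> P"
  show "(if pcat t q r = Some p then d q * x r else 0)
      = (if q = (fst p, []) \<and> r = p then \<phi> (fst p) * x p else 0)"
  proof (cases "snd q = []")
    case True
    then have "pcat t q r = Some p \<longleftrightarrow> q = (fst p, []) \<and> r = p"
      by (cases q; cases r; cases p) (auto simp: pcat_eq_Some ptgt_def)
    then show ?thesis using d q True by auto
  qed (use d q in auto)
qed

lemma amult_diagonal_right:
  assumes d: "\<forall>q\<in>P. d q = (if snd q = [] then \<phi> (fst q) else 0)" and p: "p \<in> P"
  shows "amult P t x d p = x p * \<phi> (ptgt t p)"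
  unfolding amult_eq_double_sum[OF p]
proof (rule double_sum_single[OF p NP_vertex[OF NP_ptgt[OF p]]])
  fix q r assume r: "r \<in> P"
  show "(if pcat t q r = Some p then x q * d r else 0)
      = (if q = p \<and> r = (ptgt t p, []) then x p * \<phi> (ptgt t p) else 0)"
  proof (cases "snd r = []")
    case True
    then have "pcat t q r = Some p \<longleftrightarrow> q = p \<and> r = (ptgt t p, [])"
      by (cases q; cases r; cases p) (auto simp: pcat_eq_Some ptgt_def)
    then show ?thesis using d r True by auto
  qed (use d r in auto)
qed

lemma aunit_diagonal: "\<forall>q\<in>P. aunit P q = (if snd q = [] then 1 else 0)"
  by (simp add: aunit_def)

lemma amult_unit_left:
  assumes "f \<in> algA P" shows "amult P t (aunit P) f = f"
proof
  fix p
  show "amult P t (aunit P) f p = f p"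
    using amult_diagonal_left[OF aunit_diagonal, of p f] amult_outside[of p] algA_outside[OF assms, of p]
    by (cases "p \<in> P") auto
qed

lemma amult_unit_right:
  assumes "f \<in> algA P" shows "amult P t f (aunit P) = f"
proof
  fix p
  show "amult P t f (aunit P) p = f p"
    using amult_diagonal_right[OF aunit_diagonal, of p f] amult_outside[of p] algA_outside[OF assms, of p]
    by (cases "p \<in> P") auto
qed

lemma amult_vertex_coeff:
  assumes v: "v \<in> V"
  shows "amult P t f g (v, []) = f (v, []) * g (v, [])"
  unfolding amult_eq_double_sum[OF NP_vertex[OF v]]
  by (rule double_sum_single[OF NP_vertex[OF v] NP_vertex[OF v]])
    (auto simp: pcat_eq_Some ptgt_def)

lemma amult_basis_elt_arrow:
  assumes qa: "(fst q, snd q @ [a]) \<in> P" and tgt: "ptgt t q = s a"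
  shows "amult P t (basis_elt q) (basis_elt (s a, [a])) = (basis_elt (fst q, snd q @ [a]) :: _ \<Rightarrow> 'k::field)"
proof
  fix p
  show "amult P t (basis_elt q) (basis_elt (s a, [a])) p = (basis_elt (fst q, snd q @ [a]) :: _ \<Rightarrow> 'k) p"
  proof (cases "p \<in> P")
    case False
    then show ?thesis using qa by (auto simp: amult_outside basis_elt_def)
  next
    case p: True
    have q: "q \<in> P" using NP_prefix[of "fst q" "snd q" "[a]"] qa by simp
    have a: "(s a, [a]) \<in> P" using NP_suffix[of "fst q" "snd q" "[a]"] qa tgt by simp
    show ?thesis unfolding amult_eq_double_sum[OF p]
      by (rule double_sum_single[OF q a]) (auto simp: pcat_eq_Some basis_elt_def tgt)
  qed
qed

section \<open>Subalgebras and their radical\<close>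

definition subalg :: "(('v \<times> 'a list) \<Rightarrow> 'k::field) set \<Rightarrow> bool" where
  "subalg S \<longleftrightarrow> S \<subseteq> algA P \<and> aunit P \<in> S
     \<and> (\<forall>x\<in>S. \<forall>y\<in>S. (\<lambda>p. x p + y p) \<in> S \<and> amult P t x y \<in> S)
     \<and> (\<forall>c x. x \<in> S \<longrightarrow> (\<lambda>p. c * x p) \<in> S)"

lemma subalg_subset: "subalg S \<Longrightarrow> x \<in> S \<Longrightarrow> x \<in> algA P"
  unfolding subalg_def by blast

lemma subalg_unit: "subalg S \<Longrightarrow> aunit P \<in> S"
  unfolding subalg_def by blast

lemma subalg_add: "subalg S \<Longrightarrow> x \<in> S \<Longrightarrow> y \<in> S \<Longrightarrow> (\<lambda>p. x p + y p) \<in> S"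
  unfolding subalg_def by blast

lemma subalg_mult: "subalg S \<Longrightarrow> x \<in> S \<Longrightarrow> y \<in> S \<Longrightarrow> amult P t x y \<in> S"
  unfolding subalg_def by blast

lemma subalg_smult: "subalg S \<Longrightarrow> x \<in> S \<Longrightarrow> (\<lambda>p. c * x p) \<in> S"
  unfolding subalg_def by blast

lemma subalg_zero: "subalg S \<Longrightarrow> (\<lambda>p. 0) \<in> S"
  using subalg_smult[OF _ subalg_unit, of S 0] by simp

lemma subalg_neg: "subalg S \<Longrightarrow> x \<in> S \<Longrightarrow> (\<lambda>p. - x p) \<in> S"
  using subalg_smult[of S x "-1"] by simp

lemma subalg_diff: "subalg S \<Longrightarrow> x \<in> S \<Longrightarrow> y \<in> S \<Longrightarrow> (\<lambda>p. x p - y p) \<in> S"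
  using subalg_add[of S x "\<lambda>p. - y p"] subalg_neg[of S y] by simp

lemma subalg_sum:
  assumes "subalg S" "finite X" "\<forall>q\<in>X. g q \<in> S"
  shows "(\<lambda>p. \<Sum>q\<in>X. c q * g q p) \<in> S"
  using assms(2,3)
proof (induction X rule: finite_induct)
  case empty
  then show ?case using subalg_zero[OF assms(1)] by simp
next
  case (insert x X)
  then show ?case using subalg_add[OF assms(1) subalg_smult[OF assms(1)]] by simp
qed

lemma subalg_apow: "subalg S \<Longrightarrow> z \<in> S \<Longrightarrow> apow P t z k \<in> S"
  by (induction k) (auto simp: subalg_unit subalg_mult)

lemma apow_in_algA: "apow P t z k \<in> algA P"
  by (cases k) (simp_all add: aunit_in_algA amult_in_algA)

lemma subalg_algA: "subalg (algA P)"
  unfolding subalg_def by (simp add: aunit_in_algA amult_in_algA) (simp add: algA_def)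

lemma subalg_center:
  assumes S: "subalg S" shows "subalg (center P t S)"
  unfolding subalg_def
proof (intro conjI ballI allI impI)
  show "center P t S \<subseteq> algA P" using S by (auto simp: center_def dest: subalg_subset)
  show "aunit P \<in> center P t S" using S
    by (auto simp: center_def subalg_unit amult_unit_left amult_unit_right dest: subalg_subset)
  fix x y assume x: "x \<in> center P t S" and y: "y \<in> center P t S"
  then have xS: "x \<in> S" and yS: "y \<in> S" and xc: "\<forall>w\<in>S. amult P t x w = amult P t w x"
    and yc: "\<forall>w\<in>S. amult P t y w = amult P t w y" by (auto simp: center_def)
  show "(\<lambda>p. x p + y p) \<in> center P t S"
    using xS yS xc yc S by (auto simp: center_def amult_add_left amult_add_right subalg_add)
  have "amult P t (amult P t x y) w = amult P t w (amult P t x y)" if w: "w \<in> S" for w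
  proof -
    have "amult P t (amult P t x y) w = amult P t x (amult P t w y)"
      using yc w by (simp add: amult_assoc)
    also have "\<dots> = amult P t w (amult P t x y)"
      using xc w by (simp flip: amult_assoc)
    finally show ?thesis .
  qed
  then show "amult P t x y \<in> center P t S"
    using S xS yS by (simp add: center_def subalg_mult)
next
  fix c x assume "x \<in> center P t S"
  then show "(\<lambda>p. c * x p) \<in> center P t S"
    using S by (auto simp: center_def amult_smult_left amult_smult_right subalg_smult)
qed

definition vanishes_below :: "(('v \<times> 'a list) \<Rightarrow> 'k::field) \<Rightarrow> nat \<Rightarrow> bool" where
  "vanishes_below f m \<longleftrightarrow> (\<forall>p. length (snd p) < m \<longrightarrow> f p = 0)"

lemma vanishes_below_amult:
  assumes f: "vanishes_below f a" and g: "vanishes_below g b"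
  shows "vanishes_below (amult P t f g) (a + b)"
  unfolding vanishes_below_def
proof (intro allI impI)
  fix p :: "'v \<times> 'a list" assume l: "length (snd p) < a + b"
  have "f q * g r = 0" if "pcat t q r = Some p" for q r
  proof -
    have "length (snd q) < a \<or> length (snd r) < b"
      using that l by (auto simp: pcat_eq_Some)
    then show ?thesis using f g unfolding vanishes_below_def by (metis mult_zero_left mult_zero_right)
  qed
  then show "amult P t f g p = 0"
    by (cases "p \<in> P") (simp_all add: amult_outside amult_eq_double_sum sum.neutral)
qed

lemma vanishes_below_apow:
  assumes "vanishes_below z 1" shows "vanishes_below (apow P t z k) k"
proof (induction k)
  case 0
  then show ?case by (simp add: vanishes_below_def)
next
  case (Suc k)
  then show ?case using vanishes_below_amult[OF Suc.IH assms] by simp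
qed

lemma apow_nilpotent:
  assumes "vanishes_below z 1" shows "\<exists>m. apow P t z m = (\<lambda>p. 0)"
proof -
  obtain N where N: "\<forall>p\<in>P. length (snd p) < N" using NP_length_bound by blast
  have "apow P t z (Suc N) p = 0" for p
  proof (cases "p \<in> P")
    case True
    then have "length (snd p) < Suc N" using N by (simp add: less_SucI)
    then show ?thesis using vanishes_below_apow[OF assms] unfolding vanishes_below_def by blast
  qed (simp add: amult_outside)
  then show ?thesis by blast
qed

lemma vanishes_below_one:
  assumes "z \<in> algA P" and "\<forall>v\<in>V. z (v, []) = 0" shows "vanishes_below z 1"
  unfolding vanishes_below_def
proof (intro allI impI)
  fix p :: "'v \<times> 'a list" assume "length (snd p) < 1"
  then obtain v where p: "p = (v, [])" by (cases p) auto
  then show "z p = 0"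
    using assms NP_fst[of "(v, [])"] algA_outside[of z "(v, [])"] by (cases "v \<in> V") auto
qed

lemma left_ideal_unit_eq:
  assumes S: "subalg S" and L: "left_ideal P t S L" and u: "aunit P \<in> L"
  shows "L = S"
proof -
  have "w \<in> L" if "w \<in> S" for w
    using L u that amult_unit_right[OF subalg_subset[OF S that]] unfolding left_ideal_def by metis
  then show ?thesis using L unfolding left_ideal_def by blast
qed

lemma left_ideal_add_principal:
  assumes S: "subalg S" and L: "left_ideal P t S L" and y: "y \<in> S"
  shows "left_ideal P t S {w. \<exists>l\<in>L. \<exists>x\<in>S. w = (\<lambda>p. l p + amult P t x y p)}"
    (is "left_ideal P t S ?L'")
proof -
  have LS: "L \<subseteq> S" and L0: "(\<lambda>p. 0) \<in> L"
    and Ladd: "\<And>a b. a \<in> L \<Longrightarrow> b \<in> L \<Longrightarrow> (\<lambda>p. a p + b p) \<in> L"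
    and Lneg: "\<And>a. a \<in> L \<Longrightarrow> (\<lambda>p. - a p) \<in> L"
    and Lmult: "\<And>x a. x \<in> S \<Longrightarrow> a \<in> L \<Longrightarrow> amult P t x a \<in> L"
    using L unfolding left_ideal_def by blast+
  show ?thesis
    unfolding left_ideal_def
  proof (intro conjI ballI subsetI)
    fix w assume "w \<in> ?L'"
    then obtain l x where "l \<in> L" "x \<in> S" "w = (\<lambda>p. l p + amult P t x y p)" by blast
    then show "w \<in> S" using LS subalg_add[OF S _ subalg_mult[OF S _ y]] by blast
  next
    have "(\<lambda>p. 0) = (\<lambda>p. (\<lambda>p. 0) p + amult P t (\<lambda>p. 0) y p)" by (simp add: amult_zero_left)
    then show "(\<lambda>p. 0) \<in> ?L'"
      by (intro CollectI bexI[OF _ L0] bexI[OF _ subalg_zero[OF S]])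
  next
    fix a b assume "a \<in> ?L'" "b \<in> ?L'"
    then obtain l1 x1 l2 x2 where l: "l1 \<in> L" "l2 \<in> L" and x: "x1 \<in> S" "x2 \<in> S"
      and a: "a = (\<lambda>p. l1 p + amult P t x1 y p)" and b: "b = (\<lambda>p. l2 p + amult P t x2 y p)"
      by blast
    have "(\<lambda>p. a p + b p) = (\<lambda>p. (\<lambda>p. l1 p + l2 p) p + amult P t (\<lambda>p. x1 p + x2 p) y p)"
      by (simp add: a b amult_add_left algebra_simps)
    then show "(\<lambda>p. a p + b p) \<in> ?L'"
      by (intro CollectI bexI[OF _ Ladd[OF l]] bexI[OF _ subalg_add[OF S x]])
  next
    fix a assume "a \<in> ?L'"
    then obtain l x where l: "l \<in> L" and x: "x \<in> S" and a: "a = (\<lambda>p. l p + amult P t x y p)"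
      by blast
    have "(\<lambda>p. - a p) = (\<lambda>p. (\<lambda>p. - l p) p + amult P t (\<lambda>p. (-1) * x p) y p)"
      using amult_smult_left[of "-1" x y] by (simp add: a)
    then show "(\<lambda>p. - a p) \<in> ?L'"
      by (intro CollectI bexI[OF _ Lneg[OF l]] bexI[OF _ subalg_smult[OF S x]])
  next
    fix w a assume w: "w \<in> S" and "a \<in> ?L'"
    then obtain l x where l: "l \<in> L" and x: "x \<in> S" and a: "a = (\<lambda>p. l p + amult P t x y p)"
      by blast
    have "amult P t w a = (\<lambda>p. amult P t w l p + amult P t (amult P t w x) y p)"
      by (simp add: a amult_add_right amult_assoc)
    then show "amult P t w a \<in> ?L'"
      by (intro CollectI bexI[OF _ Lmult[OF w l]] bexI[OF _ subalg_mult[OF S w x]])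
  qed
qed

text \<open>If \<open>z\<^sup>m = 0\<close> then \<open>(1 + z + \<dots> + z\<^sup>m\<^sup>-\<^sup>1)(1 - z) = 1\<close>.\<close>

lemma left_ideal_unit_of_nilpotent:
  assumes S: "subalg S" and L: "left_ideal P t S L" and z: "z \<in> S"
    and nil: "apow P t z m = (\<lambda>p. 0)" and l: "(\<lambda>p. aunit P p - z p) \<in> L"
  shows "aunit P \<in> L"
proof -
  let ?l = "\<lambda>p. aunit P p - z p"
  have step: "amult P t (apow P t z k) ?l = (\<lambda>p. apow P t z k p - apow P t z (Suc k) p)" for k
  proof -
    have "?l = (\<lambda>p. aunit P p + (-1) * z p)" by simp
    then have "amult P t (apow P t z k) ?l
        = (\<lambda>p. amult P t (apow P t z k) (aunit P) p + (-1) * amult P t (apow P t z k) z p)"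
      by (simp only: amult_add_right amult_smult_right)
    then show ?thesis by (simp add: amult_unit_right apow_in_algA)
  qed
  have telescope: "(\<lambda>p. \<Sum>k<n. amult P t (apow P t z k) ?l p) = (\<lambda>p. aunit P p - apow P t z n p)" for n
    by (induction n) (simp_all add: step fun_eq_iff)
  have L0: "(\<lambda>p. 0) \<in> L"
    and Ladd: "\<And>a b. a \<in> L \<Longrightarrow> b \<in> L \<Longrightarrow> (\<lambda>p. a p + b p) \<in> L"
    and Lmult: "\<And>x a. x \<in> S \<Longrightarrow> a \<in> L \<Longrightarrow> amult P t x a \<in> L"
    using L unfolding left_ideal_def by blast+
  have "(\<lambda>p. \<Sum>k<n. amult P t (apow P t z k) ?l p) \<in> L" for n
  proof (induction n)
    case 0
    then show ?case using L0 by simp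
  next
    case (Suc n)
    then show ?case using Ladd[OF Suc Lmult[OF subalg_apow[OF S z] l]] by simp
  qed
  from this[of m] have "(\<lambda>p. \<Sum>k<m. amult P t (apow P t z k) ?l p) \<in> L" .
  moreover have "(\<lambda>p. \<Sum>k<m. amult P t (apow P t z k) ?l p) = aunit P"
    using telescope[of m] nil by simp
  ultimately show ?thesis by simp
qed

lemma max_left_ideal_unit_decomp:
  assumes S: "subalg S" and L: "max_left_ideal P t S L" and y: "y \<in> S" "y \<notin> L"
  obtains l x where "l \<in> L" and "x \<in> S" and "aunit P = (\<lambda>p. l p + amult P t x y p)"
proof -
  let ?L' = "{w. \<exists>l\<in>L. \<exists>x\<in>S. w = (\<lambda>p. l p + amult P t x y p)}"
  have LI: "left_ideal P t S L"
    and Lmax: "\<And>L'. left_ideal P t S L' \<Longrightarrow> L \<subseteq> L' \<Longrightarrow> L' = L \<or> L' = S"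
    using L unfolding max_left_ideal_def by blast+
  have L0: "(\<lambda>p. 0) \<in> L" using LI by (simp add: left_ideal_def)
  have "l \<in> ?L'" if l: "l \<in> L" for l
  proof -
    have "l = (\<lambda>p. l p + amult P t (\<lambda>p. 0) y p)" by (simp add: amult_zero_left)
    then show ?thesis by (intro CollectI bexI[OF _ l] bexI[OF _ subalg_zero[OF S]])
  qed
  moreover have "y \<in> ?L'"
  proof -
    have "y = (\<lambda>p. (\<lambda>p. 0) p + amult P t (aunit P) y p)"
      using amult_unit_left[OF subalg_subset[OF S y(1)]] by simp
    then show ?thesis by (intro CollectI bexI[OF _ L0] bexI[OF _ subalg_unit[OF S]])
  qed
  ultimately have "?L' = S"
    using Lmax[OF left_ideal_add_principal[OF S LI y(1)]] y(2) by blast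
  then have "aunit P \<in> ?L'" using subalg_unit[OF S] by simp
  then show ?thesis using that by blast
qed

lemma vertex_zero_in_max_left_ideal:
  assumes S: "subalg S" and L: "max_left_ideal P t S L" and y: "y \<in> S"
    and y0: "\<forall>v\<in>V. y (v, []) = 0"
  shows "y \<in> L"
proof (rule ccontr)
  assume "y \<notin> L"
  then obtain l x where l: "l \<in> L" and x: "x \<in> S" and u: "aunit P = (\<lambda>p. l p + amult P t x y p)"
    using max_left_ideal_unit_decomp[OF S L y] by blast
  have LI: "left_ideal P t S L" and "L \<noteq> S" using L unfolding max_left_ideal_def by blast+
  define z where "z = amult P t x y"
  have z: "z \<in> S" unfolding z_def using S x y by (rule subalg_mult)
  have "\<forall>v\<in>V. z (v, []) = 0" using y0 by (simp add: z_def amult_vertex_coeff)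
  then obtain m where "apow P t z m = (\<lambda>p. 0)"
    using apow_nilpotent[OF vanishes_below_one[OF subalg_subset[OF S z]]] by blast
  moreover have "(\<lambda>p. aunit P p - z p) \<in> L" unfolding z_def u using l by simp
  ultimately have "aunit P \<in> L" using left_ideal_unit_of_nilpotent[OF S LI z] by blast
  then show False using left_ideal_unit_eq[OF S LI] \<open>L \<noteq> S\<close> by blast
qed

lemma left_ideal_vertex_kernel:
  assumes S: "subalg S" and v: "v \<in> V"
  shows "left_ideal P t S {z \<in> S. z (v, []) = 0}" (is "left_ideal P t S ?M")
  unfolding left_ideal_def
proof (intro conjI ballI)
  show "?M \<subseteq> S" by blast
  show "(\<lambda>p. 0) \<in> ?M" using subalg_zero[OF S] by simp
next
  fix x y assume "x \<in> ?M" "y \<in> ?M"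
  then show "(\<lambda>p. x p + y p) \<in> ?M" using subalg_add[OF S] by simp
next
  fix x assume "x \<in> ?M"
  then show "(\<lambda>p. - x p) \<in> ?M" using subalg_neg[OF S] by simp
next
  fix x y assume "x \<in> S" "y \<in> ?M"
  then show "amult P t x y \<in> ?M" using subalg_mult[OF S] by (simp add: amult_vertex_coeff[OF v])
qed

lemma max_left_ideal_vertex_kernel:
  assumes S: "subalg S" and v: "v \<in> V"
  shows "max_left_ideal P t S {z \<in> S. z (v, []) = 0}" (is "max_left_ideal P t S ?M")
proof -
  have "left_ideal P t S ?M" by (rule left_ideal_vertex_kernel[OF S v])
  moreover have "?M \<noteq> S"
  proof
    assume "?M = S"
    then have "aunit P \<in> ?M" using subalg_unit[OF S] by simp
    then show False using NP_vertex[OF v] by (simp add: aunit_def)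
  qed
  moreover have "L' = S" if L': "left_ideal P t S L'" and M_sub: "?M \<subseteq> L'" and "\<not> L' \<subseteq> ?M" for L'
  proof -
    have L'S: "L' \<subseteq> S" and L'add: "\<And>x y. x \<in> L' \<Longrightarrow> y \<in> L' \<Longrightarrow> (\<lambda>p. x p + y p) \<in> L'"
      and L'mult: "\<And>x y. x \<in> S \<Longrightarrow> y \<in> L' \<Longrightarrow> amult P t x y \<in> L'"
      using L' unfolding left_ideal_def by blast+
    obtain z where z: "z \<in> L'" and zv: "z (v, []) \<noteq> 0"
      using \<open>\<not> L' \<subseteq> ?M\<close> L'S by blast
    have zS: "z \<in> S" using z L'S by blast
    let ?w = "\<lambda>p. inverse (z (v, [])) * z p"
    have "amult P t (\<lambda>p. inverse (z (v, [])) * aunit P p) z = ?w"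
      by (simp add: amult_smult_left amult_unit_left[OF subalg_subset[OF S zS]])
    then have w: "?w \<in> L'"
      using L'mult[OF subalg_smult[OF S subalg_unit[OF S], of "inverse (z (v, []))"] z] by simp
    have "(\<lambda>p. aunit P p - ?w p) \<in> ?M"
      using zv NP_vertex[OF v] subalg_diff[OF S subalg_unit[OF S] subalg_smult[OF S zS]]
      by (simp add: aunit_def)
    then have "(\<lambda>p. (aunit P p - ?w p) + ?w p) \<in> L'"
      using L'add[OF _ w] M_sub by blast
    then show ?thesis using left_ideal_unit_eq[OF S L'] by simp
  qed
  ultimately show ?thesis unfolding max_left_ideal_def by blast
qed

lemma jrad_subalg:
  assumes "subalg S"
  shows "jrad P t S = {z \<in> S. \<forall>v\<in>V. z (v, []) = 0}"
  using vertex_zero_in_max_left_ideal[OF assms] max_left_ideal_vertex_kernel[OF assms]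
  unfolding jrad_def by blast

section \<open>Gluing two vertices\<close>

definition glued :: "'v \<Rightarrow> 'v \<Rightarrow> (('v \<times> 'a list) \<Rightarrow> 'k::field) set" where
  "glued u w = {f \<in> algA P. f (u, []) = f (w, [])}"

lemma subalg_glued:
  assumes u: "u \<in> V" and w: "w \<in> V"
  shows "subalg (glued u w)"
  unfolding subalg_def glued_def
  using NP_vertex[OF u] NP_vertex[OF w]
  by (auto simp: aunit_in_algA amult_in_algA amult_vertex_coeff[OF u] amult_vertex_coeff[OF w])
    (auto simp: algA_def aunit_def)

lemma basis_elt_in_subalg:
  fixes S :: "(('v \<times> 'a list) \<Rightarrow> 'k::field) set"
  assumes S: "subalg S" and arrows: "\<forall>a\<in>Ar. arrow_elt s a \<in> S"
  shows "q \<in> P \<Longrightarrow> snd q \<noteq> [] \<Longrightarrow> basis_elt q \<in> S"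
proof (induction "snd q" arbitrary: q rule: rev_induct)
  case Nil
  then show ?case by simp
next
  case (snoc a w)
  obtain v where q: "q = (v, w @ [a])" using snoc.hyps by (metis prod.collapse)
  have "(ptgt t (v, w), [a]) \<in> P" using NP_suffix snoc.prems q by blast
  then have tgt: "ptgt t (v, w) = s a" and a: "a \<in> Ar" by (auto simp: NP_def valid_path_def)
  have arrow: "basis_elt (s a, [a]) \<in> S" using arrows a by (simp add: arrow_elt_def basis_elt_def)
  show ?case
  proof (cases "w = []")
    case True
    then show ?thesis using arrow q tgt by (simp add: ptgt_def)
  next
    case False
    have "basis_elt (v, w) \<in> S" using snoc.hyps(1)[of "(v, w)"] NP_prefix snoc.prems q False by auto
    then have "amult P t (basis_elt (v, w)) (basis_elt (s a, [a])) \<in> S"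
      using subalg_mult[OF S _ arrow] by blast
    moreover have "amult P t (basis_elt (v, w)) (basis_elt (s a, [a])) = (basis_elt q :: _ \<Rightarrow> 'k)"
      using amult_basis_elt_arrow[of "(v, w)" a] snoc.prems q tgt by simp
    ultimately show ?thesis by simp
  qed
qed

lemma gen_subalg_eqI:
  assumes "subalg S\<^sub>0" "G \<subseteq> S\<^sub>0" "\<And>S. subalg S \<Longrightarrow> G \<subseteq> S \<Longrightarrow> S\<^sub>0 \<subseteq> S"
  shows "gen_subalg P t G = S\<^sub>0"
proof -
  have "gen_subalg P t G = \<Inter> {S. subalg S \<and> G \<subseteq> S}"
    unfolding gen_subalg_def subalg_def by (rule arg_cong[of _ _ Inter], rule Collect_cong) blast
  also have "\<dots> = S\<^sub>0"
    using assms by (intro antisym Inter_lower Inter_greatest) auto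
  finally show ?thesis .
qed

lemma glued_eq_sum_basis:
  assumes f: "f \<in> glued u w" and "u \<noteq> w"
  shows "f = (\<lambda>p. f (u, []) * (vert_elt u p + vert_elt w p)
    + (\<Sum>q\<in>P - {(u, []), (w, [])}. f q * basis_elt q p))"
proof
  fix p
  let ?Q = "P - {(u, []), (w, [])}"
  have "(\<Sum>q\<in>?Q. f q * basis_elt q p) = (\<Sum>q\<in>?Q. if p = q then f p else 0)"
    by (rule sum.cong) (auto simp: basis_elt_def)
  also have "\<dots> = (if p \<in> ?Q then f p else 0)"
    using finite_NP by (simp add: sum.delta)
  finally show "f p = f (u, []) * (vert_elt u p + vert_elt w p) + (\<Sum>q\<in>?Q. f q * basis_elt q p)"
    using f \<open>u \<noteq> w\<close> algA_outside[of f p] by (auto simp: glued_def vert_elt_def)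
qed

lemma gen_subalg_glued:
  assumes u: "u \<in> V" and w: "w \<in> V" and "u \<noteq> w"
  shows "gen_subalg P t ({\<lambda>p. vert_elt u p + vert_elt w p} \<union> vert_elt ` (V - {u, w}) \<union> arrow_elt s ` Ar)
    = (glued u w :: (('v \<times> 'a list) \<Rightarrow> 'k::field) set)"
    (is "gen_subalg P t ?G = _")
proof (rule gen_subalg_eqI[OF subalg_glued[OF u w]])
  have "(\<lambda>p. vert_elt u p + vert_elt w p) \<in> glued u w"
    using NP_vertex[OF u] NP_vertex[OF w] \<open>u \<noteq> w\<close> by (auto simp: glued_def algA_def vert_elt_def)
  moreover have "vert_elt x \<in> glued u w" if "x \<in> V - {u, w}" for x
    using NP_vertex[of x] that by (auto simp: glued_def algA_def vert_elt_def)
  moreover have "arrow_elt s a \<in> glued u w" if "a \<in> Ar" for a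
    using NP_arrow[OF that] by (auto simp: glued_def algA_def arrow_elt_def)
  ultimately show "?G \<subseteq> glued u w" by blast
  fix S :: "(('v \<times> 'a list) \<Rightarrow> 'k) set" assume S: "subalg S" and GS: "?G \<subseteq> S"
  let ?Q = "P - {(u, []), (w, [])}"
  have basis: "basis_elt q \<in> S" if q: "q \<in> ?Q" for q
  proof (cases "snd q = []")
    case True
    then have "basis_elt q = vert_elt (fst q)" and "fst q \<in> V - {u, w}"
      using q NP_fst by (auto simp: basis_elt_def vert_elt_def prod_eq_iff)
    then show ?thesis using GS by auto
  next
    case False
    then show ?thesis using basis_elt_in_subalg[OF S] GS q by blast
  qed
  show "glued u w \<subseteq> S"
  proof
    fix f :: "('v \<times> 'a list) \<Rightarrow> 'k" assume f: "f \<in> glued u w"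
    have vertices: "(\<lambda>p. f (u, []) * (vert_elt u p + vert_elt w p)) \<in> S"
      using subalg_smult[OF S] GS by blast
    have paths: "(\<lambda>p. \<Sum>q\<in>?Q. f q * basis_elt q p) \<in> S"
      using subalg_sum[OF S, of ?Q basis_elt f] basis finite_NP by blast
    show "f \<in> S" using subalg_add[OF S vertices paths] glued_eq_sum_basis[OF f \<open>u \<noteq> w\<close>] by simp
  qed
qed

section \<open>Centres\<close>

lemma subalg_subspace:
  fixes S :: "(('v \<times> 'a list) \<Rightarrow> 'k::field) set"
  assumes "subalg S" shows "module.subspace (\<lambda>c f. \<lambda>p. c * f p) S"
proof -
  interpret fun_space: vector_space "\<lambda>c (f :: _ \<Rightarrow> 'k). \<lambda>p. c * f p" by (rule vector_space_fun)
  show ?thesis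
    unfolding fun_space.subspace_def
    using subalg_zero[OF assms] subalg_add[OF assms] subalg_smult[OF assms]
    by (simp add: zero_fun_def plus_fun_def)
qed

lemma algA_subset_span_basis:
  "algA P \<subseteq> module.span (\<lambda>c (f :: _ \<Rightarrow> 'k::field). \<lambda>p. c * f p) (basis_elt ` P)"
proof
  interpret fun_space: vector_space "\<lambda>c (f :: _ \<Rightarrow> 'k). \<lambda>p. c * f p" by (rule vector_space_fun)
  fix f :: "_ \<Rightarrow> 'k" assume f: "f \<in> algA P"
  have "(\<Sum>q\<in>P. (\<lambda>p. f q * basis_elt q p)) p = (\<Sum>q\<in>P. if p = q then f p else 0)" for p
    by (auto simp: sum_fun_apply basis_elt_def intro!: sum.cong)
  then have "f p = (\<Sum>q\<in>P. (\<lambda>p. f q * basis_elt q p)) p" for p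
    using finite_NP algA_outside[OF f, of p] by simp
  then have "f = (\<Sum>q\<in>P. (\<lambda>p. f q * basis_elt q p))" ..
  also have "\<dots> \<in> fun_space.span (basis_elt ` P)"
    by (intro fun_space.span_sum fun_space.span_scale fun_space.span_base) simp
  finally show "f \<in> fun_space.span (basis_elt ` P)" .
qed

lemma qconn_sym: "(x, y) \<in> qconn V Ar s t \<Longrightarrow> (y, x) \<in> qconn V Ar s t"
proof -
  have "sym {(u, w). \<exists>a\<in>Ar. (s a = u \<and> t a = w) \<or> (s a = w \<and> t a = u)}"
    by (auto simp: sym_def)
  then show "(x, y) \<in> qconn V Ar s t \<Longrightarrow> (y, x) \<in> qconn V Ar s t"
    unfolding qconn_def by (meson sym_rtrancl symD)
qed

lemma NP_connected: "(v, w) \<in> P \<Longrightarrow> (v, ptgt t (v, w)) \<in> qconn V Ar s t"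
proof (induction w rule: rev_induct)
  case Nil
  then show ?case by (simp add: ptgt_def qconn_def)
next
  case (snoc a w)
  have "(ptgt t (v, w), [a]) \<in> P" using NP_suffix snoc.prems by blast
  then have "s a = ptgt t (v, w)" and "a \<in> Ar" by (auto simp: NP_def valid_path_def)
  moreover have "(v, ptgt t (v, w)) \<in> qconn V Ar s t" using snoc.IH NP_prefix snoc.prems by blast
  ultimately show ?case
    unfolding qconn_def by (auto simp: ptgt_def intro: rtrancl_into_rtrancl)
qed

definition component_elt :: "'v \<Rightarrow> ('v \<times> 'a list) \<Rightarrow> 'k::field" where
  "component_elt u p = (if snd p = [] \<and> fst p \<in> V \<and> (u, fst p) \<in> qconn V Ar s t then 1 else 0)"

lemma component_elt_in_algA: "component_elt u \<in> algA P"
  using NP_vertex by (auto simp: algA_def component_elt_def)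

lemma component_elt_center: "(component_elt u :: _ \<Rightarrow> 'k::field) \<in> center P t (algA P)"
proof -
  let ?\<phi> = "\<lambda>w. if w \<in> V \<and> (u, w) \<in> qconn V Ar s t then 1 else 0"
  have diag: "\<forall>q\<in>P. component_elt u q = (if snd q = [] then ?\<phi> (fst q) else 0)"
    by (simp add: component_elt_def)
  have same_component: "?\<phi> (fst p) = ?\<phi> (ptgt t p)" if p: "p \<in> P" for p
  proof -
    have "(fst p, ptgt t p) \<in> qconn V Ar s t" using NP_connected[of "fst p" "snd p"] p by simp
    then have "(u, fst p) \<in> qconn V Ar s t \<longleftrightarrow> (u, ptgt t p) \<in> qconn V Ar s t"
      using qconn_sym unfolding qconn_def by (meson rtrancl_trans)
    then show ?thesis using NP_fst[OF p] NP_ptgt[OF p] by simp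
  qed
  have "amult P t (component_elt u) x p = amult P t x (component_elt u) p" for x :: "_ \<Rightarrow> 'k" and p
  proof (cases "p \<in> P")
    case True
    show ?thesis
      unfolding amult_diagonal_left[OF diag True] amult_diagonal_right[OF diag True] same_component[OF True]
      by (rule mult.commute)
  qed (simp add: amult_outside)
  then show ?thesis using component_elt_in_algA by (simp add: center_def fun_eq_iff)
qed

end

locale separated_vertices = monomial_algebra V Ar s t R
  for V :: "'v set" and Ar :: "'a set" and s t :: "'a \<Rightarrow> 'v" and R :: "'a list set" +
  fixes v1 vn :: 'v
  assumes v1: "v1 \<in> V" and vn: "vn \<in> V" and separated: "(v1, vn) \<notin> qconn V Ar s t"
begin

lemma v1_neq_vn: "v1 \<noteq> vn"
  using separated by (auto simp: qconn_def)

lemma component_elt_v1: "component_elt v1 (v1, []) = 1"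
  using v1 by (simp add: component_elt_def qconn_def)

lemma component_elt_vn: "component_elt v1 (vn, []) = 0"
  using separated by (simp add: component_elt_def)

lemma algA_eq_glued_plus_component:
  fixes x :: "('v \<times> 'a list) \<Rightarrow> 'k::field"
  assumes x: "x \<in> algA P"
  obtains y c where "y \<in> glued v1 vn" and "x = (\<lambda>p. y p + c * component_elt v1 p)"
proof
  let ?c = "x (v1, []) - x (vn, [])"
  have "(\<lambda>p. x p - ?c * component_elt v1 p) \<in> algA P"
    using subalg_diff[OF subalg_algA x subalg_smult[OF subalg_algA component_elt_in_algA]] .
  then show "(\<lambda>p. x p - ?c * component_elt v1 p) \<in> glued v1 vn"
    by (simp add: glued_def component_elt_v1 component_elt_vn)
  show "x = (\<lambda>p. (x p - ?c * component_elt v1 p) + ?c * component_elt v1 p)" by simp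
qed

lemma center_glued_subset:
  "(center P t (glued v1 vn) :: (('v \<times> 'a list) \<Rightarrow> 'k::field) set) \<subseteq> center P t (algA P)"
proof
  fix z :: "_ \<Rightarrow> 'k" assume z: "z \<in> center P t (glued v1 vn)"
  then have zA: "z \<in> algA P" by (simp add: center_def glued_def)
  have "amult P t z x = amult P t x z" if "x \<in> algA P" for x
  proof -
    obtain y c where y: "y \<in> glued v1 vn" and x: "x = (\<lambda>p. y p + c * component_elt v1 p)"
      using algA_eq_glued_plus_component[OF \<open>x \<in> algA P\<close>] .
    have zy: "amult P t z y = amult P t y z" using z y unfolding center_def by blast
    have "amult P t (component_elt v1) z = amult P t z (component_elt v1)"
      using component_elt_center zA unfolding center_def by blast
    then show ?thesis
      unfolding x amult_add_left amult_add_right amult_smult_left amult_smult_right zy by simp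
  qed
  then show "z \<in> center P t (algA P)" using zA by (simp add: center_def)
qed

lemma center_algA_glued: "z \<in> center P t (algA P) \<Longrightarrow> z \<in> glued v1 vn \<Longrightarrow> z \<in> center P t (glued v1 vn)"
  by (auto simp: center_def glued_def)

lemma center_algA_eq:
  "(center P t (algA P) :: (('v \<times> 'a list) \<Rightarrow> 'k::field) set)
    = {y + (\<lambda>p. c * component_elt v1 p) | y c. y \<in> center P t (glued v1 vn)}"
proof -
  have ZA: "subalg (center P t (algA P) :: (('v \<times> 'a list) \<Rightarrow> 'k) set)"
    by (rule subalg_center[OF subalg_algA])
  show ?thesis
  proof (intro equalityI subsetI)
    fix z :: "_ \<Rightarrow> 'k" assume z: "z \<in> center P t (algA P)"
    obtain y c where y: "y \<in> glued v1 vn" and zy: "z = (\<lambda>p. y p + c * component_elt v1 p)"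
      using algA_eq_glued_plus_component subalg_subset[OF ZA z] by blast
    have "(\<lambda>p. z p - c * component_elt v1 p) \<in> center P t (algA P)"
      using subalg_diff[OF ZA z subalg_smult[OF ZA component_elt_center]] .
    then have "y \<in> center P t (algA P)" by (simp add: zy)
    then have "y \<in> center P t (glued v1 vn)" using y by (rule center_algA_glued)
    then show "z \<in> {y + (\<lambda>p. c * component_elt v1 p) | y c. y \<in> center P t (glued v1 vn)}"
      using zy by (auto simp: plus_fun_def)
  next
    fix z :: "_ \<Rightarrow> 'k"
    assume "z \<in> {y + (\<lambda>p. c * component_elt v1 p) | y c. y \<in> center P t (glued v1 vn)}"
    then obtain y c where "y \<in> center P t (glued v1 vn)" and "z = (\<lambda>p. y p + c * component_elt v1 p)"
      by (auto simp: plus_fun_def)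
    then show "z \<in> center P t (algA P)"
      using center_glued_subset subalg_add[OF ZA _ subalg_smult[OF ZA component_elt_center]] by blast
  qed
qed

lemma jrad_center_glued:
  "jrad P t (center P t (glued v1 vn)) = (jrad P t (center P t (algA P)) :: (('v \<times> 'a list) \<Rightarrow> 'k::field) set)"
proof -
  have "{z \<in> center P t (glued v1 vn). \<forall>v\<in>V. z (v, []) = 0}
      = {z \<in> (center P t (algA P) :: (('v \<times> 'a list) \<Rightarrow> 'k) set). \<forall>v\<in>V. z (v, []) = 0}"
    using center_glued_subset center_algA_glued v1 vn by (auto simp: glued_def center_def)
  then show ?thesis
    by (simp add: jrad_subalg subalg_center subalg_algA subalg_glued v1 vn)
qed

lemma kdim_center_algA:
  "kdim (center P t (algA P) :: (('v \<times> 'a list) \<Rightarrow> 'k::field) set)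
    = kdim (center P t (glued v1 vn) :: (('v \<times> 'a list) \<Rightarrow> 'k) set) + 1"
proof -
  let ?ZB = "center P t (glued v1 vn) :: (('v \<times> 'a list) \<Rightarrow> 'k) set"
  have "module.subspace (\<lambda>c f p. c * f p) ?ZB"
    by (intro subalg_subspace subalg_center subalg_glued v1 vn)
  moreover have "finite (basis_elt ` P :: (('v \<times> 'a list) \<Rightarrow> 'k) set)" using finite_NP by simp
  moreover have "?ZB \<subseteq> module.span (\<lambda>c f p. c * f p) (basis_elt ` P)"
    using algA_subset_span_basis by (auto simp: center_def glued_def)
  moreover have "component_elt v1 \<notin> ?ZB"
    by (simp add: center_def glued_def component_elt_v1 component_elt_vn)
  ultimately show ?thesis
    unfolding kdim_def by (rule dim_subspace_plus_line[OF vector_space_fun]) (simp add: center_algA_eq)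
qed

end

theorem proposition6p7:
  fixes V :: "'v set" and Ar :: "'a set" and s t :: "'a \<Rightarrow> 'v"
    and R :: "'a list set" and v1 vn :: 'v
  assumes finV: "finite V" and finAr: "finite Ar"
    and quiver: "\<forall>a\<in>Ar. s a \<in> V \<and> t a \<in> V"
    and rels: "\<forall>r\<in>R. 2 \<le> length r \<and> valid_path V Ar s t (s (hd r), r)"
    and admissible: "\<exists>N. \<forall>p. valid_path V Ar s t p \<and> N \<le> length (snd p) \<longrightarrow> (\<exists>r\<in>R. sublist r (snd p))"
    and v1: "v1 \<in> V" and vn: "vn \<in> V"
    and two_blocks: "(v1, vn) \<notin> qconn V Ar s t" "\<forall>w\<in>V. (v1, w) \<in> qconn V Ar s t \<or> (vn, w) \<in> qconn V Ar s t"
    and nonisol1: "\<exists>a\<in>Ar. s a = v1 \<or> t a = v1"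
    and nonisoln: "\<exists>a\<in>Ar. s a = vn \<or> t a = vn"
  shows "let P = NP V Ar s t R;
             A = (algA P :: (('v \<times> 'a list) \<Rightarrow> 'k::field) set);
             B = gen_subalg P t
                   ({\<lambda>p. vert_elt v1 p + vert_elt vn p} \<union> vert_elt ` (V - {v1, vn}) \<union> arrow_elt s ` Ar)
         in center P t B \<subseteq> center P t A
          \<and> jrad P t (center P t B) = jrad P t (center P t A)
          \<and> kdim (center P t A) = kdim (center P t B) + 1"
proof -
  interpret separated_vertices V Ar s t R v1 vn
    using finV finAr quiver rels admissible v1 vn two_blocks(1) by unfold_locales
  have "gen_subalg P t ({\<lambda>p. vert_elt v1 p + vert_elt vn p} \<union> vert_elt ` (V - {v1, vn}) \<union> arrow_elt s ` Ar)
      = (glued v1 vn :: (('v \<times> 'a list) \<Rightarrow> 'k) set)"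
    by (rule gen_subalg_glued[OF v1 vn v1_neq_vn])
  then show ?thesis
    using center_glued_subset jrad_center_glued kdim_center_algA by (simp add: Let_def)
qed

end
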